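(* Let $k\ge 4$ be an integer and let $\Sigma$ be an alphabet with $|\Sigma|=l$. If $l\le 1$, then for every antimorphic involution $\theta$ on $\Sigma^*$ there is no infinite word over $\Sigma$ that is pseudo-$k$th-power-free with respect to $\theta$. If $l\ge 3$, then for every antimorphic involution $\theta$ on $\Sigma^*$ there exists an infinite word over $\Sigma$ that is pseudo-$k$th-power-free with respect to $\theta$. If $l=2$, the existence depends on the involution: there exists a pseudo-$k$th-power-free infinite word over $\Sigma$ with respect to one antimorphic involution of $\Sigma^*$ but not with respect to another.
   Context: A function $\theta:\Sigma^*\to\Sigma^*$ is an antimorphic involution if $\theta(uv)=\theta(v)\theta(u)$ and $\theta(\theta(w))=w$ for all words $u,v,w$. For an integer $k\ge 2$, a nonempty word $w$ is a pseudo $k$th power with respect to $\theta$ if $w=u_1u_2\cdots u_k$ where for all $1\le i,j\le k$, either $u_i=u_j$ or $u_i=\theta(u_j)$. A (finite or infinite) word is pseudo-$k$th-power-free with respect to $\theta$ if none of its factors (contiguous subwords) is a pseudo $k$th power with respect to $\theta$. *)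

theory Defs
  imports Main
begin

definition antimorphic_involution :: "'a set \<Rightarrow> ('a list \<Rightarrow> 'a list) \<Rightarrow> bool" where
  "antimorphic_involution S \<theta> \<longleftrightarrow>
     (\<forall>w \<in> lists S. \<theta> w \<in> lists S) \<and>
     (\<forall>u \<in> lists S. \<forall>v \<in> lists S. \<theta> (u @ v) = \<theta> v @ \<theta> u) \<and>
     (\<forall>w \<in> lists S. \<theta> (\<theta> w) = w)"

definition pseudo_power :: "('a list \<Rightarrow> 'a list) \<Rightarrow> nat \<Rightarrow> 'a list \<Rightarrow> bool" where
  "pseudo_power \<theta> k w \<longleftrightarrow> w \<noteq> [] \<and>
     (\<exists>us. length us = k \<and> concat us = w \<and>
        (\<forall>i<k. \<forall>j<k. us ! i = us ! j \<or> us ! i = \<theta> (us ! j)))"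

definition infinite_word :: "'a set \<Rightarrow> (nat \<Rightarrow> 'a) \<Rightarrow> bool" where
  "infinite_word S x \<longleftrightarrow> (\<forall>n. x n \<in> S)"

definition pseudo_power_free_inf :: "('a list \<Rightarrow> 'a list) \<Rightarrow> nat \<Rightarrow> (nat \<Rightarrow> 'a) \<Rightarrow> bool" where
  "pseudo_power_free_inf \<theta> k x \<longleftrightarrow> (\<forall>i j. \<not> pseudo_power \<theta> k (map x [i..<j]))"

end

theory Submission
  imports Defs
begin

text \<open>
  Over at most one letter every word of length k is a pseudo k-th power. Otherwise the key
  observation is that four consecutive blocks, each equal to u or \<open>\<theta> u\<close>, always contain a square:
  either two adjacent blocks coincide or the four blocks read \<open>v w v w\<close>. Hence for \<open>k \<ge> 4\<close> every
  square-free word is pseudo-k-th-power-free, and over three letters the square-free difference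
  sequence of the Thue--Morse word works for every \<open>\<theta>\<close>. Over two letters, the involution that
  reverses a word and swaps the letters relates any two letters, so every word contains a pseudo
  k-th power; for plain reversal, however, an 8-uniform morphic image of the Thue--Morse word
  avoids them: short blocks are excluded by a finite check, long blocks cannot be reversals of
  each other, and a long fourth power would, through the markers at the block boundaries, yield
  an overlap in the Thue--Morse word.
\<close>

definition factor :: "(nat \<Rightarrow> 'a) \<Rightarrow> nat \<Rightarrow> nat \<Rightarrow> 'a list" where
  "factor x i n = map x [i..<i + n]"

lemma length_factor [simp]: "length (factor x i n) = n"
  by (simp add: factor_def)

lemma nth_factor [simp]: "s < n \<Longrightarrow> factor x i n ! s = x (i + s)"
  by (simp add: factor_def)

lemma factor_eq_factor_iff: "factor x i n = factor y j n \<longleftrightarrow> (\<forall>s<n. x (i + s) = y (j + s))"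
proof
  show "\<forall>s<n. x (i + s) = y (j + s)" if "factor x i n = factor y j n"
    using that by (metis nth_factor)
qed (intro nth_equalityI, simp_all)

lemma factor_add: "factor x i (m + n) = factor x i m @ factor x (i + m) n"
  unfolding factor_def by (metis upt_add_eq_append le_add1 add.assoc map_append)

lemma take_drop_factor: "q + l \<le> n \<Longrightarrow> take l (drop q (factor x i n)) = factor x (i + q) l"
  by (simp add: factor_def drop_map take_map add.assoc)

lemma factor_comp: "factor (h \<circ> x) i n = map h (factor x i n)"
  by (simp add: factor_def)

lemma pseudo_power_free_inf_iff_factor:
  "pseudo_power_free_inf \<theta> k x \<longleftrightarrow> (\<forall>i n. \<not> pseudo_power \<theta> k (factor x i n))"
proof
  show "\<forall>i n. \<not> pseudo_power \<theta> k (factor x i n)" if "pseudo_power_free_inf \<theta> k x"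
    using that by (simp add: pseudo_power_free_inf_def factor_def)
next
  assume free: "\<forall>i n. \<not> pseudo_power \<theta> k (factor x i n)"
  show "pseudo_power_free_inf \<theta> k x"
    unfolding pseudo_power_free_inf_def
  proof (intro allI)
    fix i j
    show "\<not> pseudo_power \<theta> k (map x [i..<j])"
    proof (cases "i \<le> j")
      case True
      then have "factor x i (j - i) = map x [i..<j]" by (simp add: factor_def)
      then show ?thesis using free by metis
    next
      case False
      then have "map x [i..<j] = []" by simp
      then show ?thesis by (simp add: pseudo_power_def)
    qed
  qed
qed

lemma set_factor_subset: "set (factor x i n) \<subseteq> range x"
  by (auto simp: factor_def)

section \<open>Pseudo powers and squares\<close>

lemma antimorphic_involution_Nil:
  assumes "antimorphic_involution S \<theta>"
  shows "\<theta> [] = []"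
proof -
  have "\<theta> [] = \<theta> [] @ \<theta> []"
    using assms unfolding antimorphic_involution_def by (metis append_Nil lists.Nil)
  then show ?thesis by simp
qed

lemma antimorphic_involution_length_le:
  assumes \<theta>: "antimorphic_involution S \<theta>" and "w \<in> lists S"
  shows "length w \<le> length (\<theta> w)"
  using \<open>w \<in> lists S\<close>
proof (induction w)
  case (Cons c w)
  then have c: "[c] \<in> lists S" and w: "w \<in> lists S" by auto
  have "\<theta> (\<theta> [c]) = [c]" using \<theta> c unfolding antimorphic_involution_def by blast
  then have "0 < length (\<theta> [c])" using antimorphic_involution_Nil[OF \<theta>] by (cases "\<theta> [c]") auto
  moreover have "\<theta> (c # w) = \<theta> w @ \<theta> [c]"
    using \<theta> c w unfolding antimorphic_involution_def by (metis append_Cons append_Nil)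
  moreover have "length w \<le> length (\<theta> w)" using Cons.IH w by simp
  ultimately show ?case by (simp del: length_greater_0_conv)
qed simp

lemma antimorphic_involution_length:
  assumes \<theta>: "antimorphic_involution S \<theta>" and w: "w \<in> lists S"
  shows "length (\<theta> w) = length w"
proof (rule antisym)
  have "\<theta> w \<in> lists S" and "\<theta> (\<theta> w) = w"
    using \<theta> w unfolding antimorphic_involution_def by blast+
  then show "length (\<theta> w) \<le> length w"
    using antimorphic_involution_length_le[OF \<theta>, of "\<theta> w"] by simp
qed (rule antimorphic_involution_length_le[OF \<theta> w])

lemma nth_eq_take_drop_concat:
  assumes "\<forall>u\<in>set us. length u = m" and "t < length us"
  shows "us ! t = take m (drop (t * m) (concat us))"
  using assms
proof (induction us arbitrary: t)
  case (Cons u us)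
  then show ?case by (cases t) (simp_all add: drop_append)
qed simp

lemma factor_in_lists: "infinite_word S x \<Longrightarrow> factor x i n \<in> lists S"
  by (auto simp: infinite_word_def factor_def)

lemma pseudo_power_parts_same_length:
  assumes \<theta>: "antimorphic_involution S \<theta>" and "concat us \<in> lists S"
    and related: "\<forall>a<length us. \<forall>b<length us. us ! a = us ! b \<or> us ! a = \<theta> (us ! b)"
    and "u \<in> set us" "v \<in> set us"
  shows "length u = length v"
proof -
  obtain a b where "a < length us" "u = us ! a" "b < length us" "v = us ! b"
    using \<open>u \<in> set us\<close> \<open>v \<in> set us\<close> by (metis in_set_conv_nth)
  moreover have "v \<in> lists S" using \<open>concat us \<in> lists S\<close> \<open>v \<in> set us\<close> by auto
  ultimately show ?thesis using related antimorphic_involution_length[OF \<theta>] by metis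
qed

lemma pseudo_power_factor_blocks:
  assumes \<theta>: "antimorphic_involution S \<theta>" and x: "infinite_word S x"
    and pp: "pseudo_power \<theta> k (factor x i n)"
  shows "\<exists>m>0. \<forall>t<k. factor x (i + t * m) m = factor x i m \<or>
                      factor x (i + t * m) m = \<theta> (factor x i m)"
proof -
  obtain us where len_us: "length us = k" and concat_us: "concat us = factor x i n"
    and related: "\<forall>a<k. \<forall>b<k. us ! a = us ! b \<or> us ! a = \<theta> (us ! b)"
    and nonempty: "factor x i n \<noteq> []"
    using pp unfolding pseudo_power_def by blast
  have "0 < k" using len_us concat_us nonempty by (cases us) auto
  define m where "m = length (us ! 0)"
  have uniform: "\<forall>u\<in>set us. length u = m"
    using pseudo_power_parts_same_length[OF \<theta>, of us] factor_in_lists[OF x] related len_us concat_us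
      \<open>0 < k\<close> unfolding m_def by (metis nth_mem)
  have "n = k * m"
  proof -
    have "map length us = map (\<lambda>_. m) us" using uniform by simp
    then have "length (concat us) = sum_list (map (\<lambda>_. m) us)" by (simp only: length_concat)
    also have "\<dots> = k * m" by (simp add: sum_list_triv len_us)
    finally show ?thesis using concat_us by simp
  qed
  moreover have "0 < n" using nonempty by (metis length_factor length_greater_0_conv)
  ultimately have "0 < m" by simp
  have block: "us ! t = factor x (i + t * m) m" if "t < k" for t
  proof -
    have "t * m + m \<le> n" using that \<open>n = k * m\<close> by (metis Suc_leI mult_Suc mult_le_mono1 add.commute)
    then show ?thesis
      using nth_eq_take_drop_concat[OF uniform, of t] that len_us concat_us take_drop_factor by simp
  qed
  show ?thesis
    using \<open>0 < m\<close> related \<open>0 < k\<close> block[of 0] block by (metis add_0_right mult_0)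
qed

lemma four_blocks_square:
  assumes "0 < m" and blocks: "\<forall>t<4. factor x (i + t * m) m \<in> {u, v}"
  shows "\<exists>p n. 0 < n \<and> factor x p n = factor x (p + n) n"
proof -
  define B where "B t = factor x (i + t * m) m" for t
  have B_uv: "B t \<in> {u, v}" if "t < 4" for t
    using blocks that unfolding B_def by blast
  have B: "B 0 = factor x i m" "B 1 = factor x (i + m) m"
    "B 2 = factor x (i + m + m) m" "B 3 = factor x (i + m + m + m) m"
    by (simp_all add: B_def numeral_eq_Suc algebra_simps)
  have "B 0 \<in> {u, v}" "B 1 \<in> {u, v}" "B 2 \<in> {u, v}" "B 3 \<in> {u, v}"
    using B_uv by simp_all
  then consider "B 0 = B 1" | "B 1 = B 2" | "B 2 = B 3" | "B 0 = B 2 \<and> B 1 = B 3"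
    by (smt (verit) insertE singletonD)
  then show ?thesis
  proof cases
    case 1
    then show ?thesis using \<open>0 < m\<close> B by metis
  next
    case 2
    then show ?thesis using \<open>0 < m\<close> B by metis
  next
    case 3
    then show ?thesis using \<open>0 < m\<close> B by metis
  next
    case 4
    then have "factor x i (m + m) = factor x (i + (m + m)) (m + m)"
      using B by (simp add: factor_add add.assoc)
    then show ?thesis using \<open>0 < m\<close> by blast
  qed
qed

definition square_free :: "(nat \<Rightarrow> 'a) \<Rightarrow> bool" where
  "square_free x \<longleftrightarrow> (\<forall>i n. 0 < n \<longrightarrow> factor x i n \<noteq> factor x (i + n) n)"

lemma square_free_imp_pseudo_power_free:
  assumes \<theta>: "antimorphic_involution S \<theta>" and x: "infinite_word S x"
    and "square_free x" and "4 \<le> k"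
  shows "pseudo_power_free_inf \<theta> k x"
  unfolding pseudo_power_free_inf_iff_factor
proof (intro allI notI)
  fix i n
  assume "pseudo_power \<theta> k (factor x i n)"
  then obtain m where "0 < m" and blocks: "\<forall>t<k. factor x (i + t * m) m = factor x i m \<or>
                                             factor x (i + t * m) m = \<theta> (factor x i m)"
    using pseudo_power_factor_blocks[OF \<theta> x] by blast
  then have "\<forall>t<4. factor x (i + t * m) m \<in> {factor x i m, \<theta> (factor x i m)}"
    using \<open>4 \<le> k\<close> by auto
  then obtain p l where "0 < l" "factor x p l = factor x (p + l) l"
    using four_blocks_square[OF \<open>0 < m\<close>] by blast
  then show False using \<open>square_free x\<close> unfolding square_free_def by blast
qed

lemma square_free_comp:
  assumes x: "square_free x" and h: "inj_on h (range x)"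
  shows "square_free (h \<circ> x)"
  unfolding square_free_def
proof (intro allI impI)
  fix i n :: nat
  assume "0 < n"
  have "inj_on h (set (factor x i n) \<union> set (factor x (i + n) n))"
    using h set_factor_subset by (meson Un_least inj_on_subset)
  then show "factor (h \<circ> x) i n \<noteq> factor (h \<circ> x) (i + n) n"
    using x \<open>0 < n\<close> unfolding square_free_def factor_comp by (simp add: inj_on_map_eq_map)
qed

section \<open>The Thue--Morse word\<close>

function thue_morse :: "nat \<Rightarrow> bool" where
  "thue_morse n = (if n = 0 then False else thue_morse (n div 2) \<noteq> odd n)"
  by auto
termination by (relation "measure id") auto

declare thue_morse.simps [simp del]

lemma thue_morse_0 [simp]: "\<not> thue_morse 0"
  by (subst thue_morse.simps) simp

lemma thue_morse_double [simp]: "thue_morse (2 * n) = thue_morse n"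
  by (cases "n = 0") (simp, subst thue_morse.simps, simp)

lemma thue_morse_double_Suc [simp]: "thue_morse (Suc (2 * n)) = (\<not> thue_morse n)"
  by (subst thue_morse.simps) simp

lemma thue_morse_no_triple: "\<not> (thue_morse j = thue_morse (j + 1) \<and> thue_morse (j + 1) = thue_morse (j + 2))"
proof (cases "even j")
  case True
  then obtain n where "j = 2 * n" by blast
  then show ?thesis by simp
next
  case False
  then obtain n where "j = Suc (2 * n)" by (metis oddE Suc_eq_plus1)
  then have "j + 1 = 2 * (n + 1)" "j + 2 = Suc (2 * (n + 1))" by simp_all
  then show ?thesis by (metis thue_morse_double thue_morse_double_Suc)
qed

lemma thue_morse_not_alternating: "\<exists>j\<ge>i. j < i + 5 \<and> thue_morse j = thue_morse (Suc j)"
proof (rule ccontr)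
  assume "\<not> ?thesis"
  then have alt: "thue_morse j \<noteq> thue_morse (Suc j)" if "i \<le> j" "j < i + 5" for j
    using that by blast
  define n where "n = (i + 1) div 2"
  define e where "e = 2 * n"
  have "i \<le> e" "e + 3 < i + 5" unfolding e_def n_def by presburger+
  then have "thue_morse e \<noteq> thue_morse (Suc e)"
    "thue_morse (Suc e) \<noteq> thue_morse (Suc (Suc e))"
    "thue_morse (Suc (Suc e)) \<noteq> thue_morse (Suc (Suc (Suc e)))"
    "thue_morse (Suc (Suc (Suc e))) \<noteq> thue_morse (Suc (Suc (Suc (Suc e))))"
    using alt by simp_all
  then have "thue_morse e = thue_morse (Suc (Suc e))"
    "thue_morse (Suc (Suc e)) = thue_morse (Suc (Suc (Suc (Suc e))))"
    by blast+
  moreover have "Suc (Suc e) = 2 * (n + 1)" "Suc (Suc (Suc (Suc e))) = 2 * (n + 2)"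
    by (simp_all add: e_def)
  ultimately show False
    using thue_morse_no_triple[of n] by (metis e_def thue_morse_double add_2_eq_Suc')
qed

lemma thue_morse_overlap_halve:
  assumes "\<forall>j. i \<le> j \<longrightarrow> j \<le> i + 2 * m \<longrightarrow> thue_morse j = thue_morse (j + 2 * m)"
  shows "\<forall>j. i div 2 \<le> j \<longrightarrow> j \<le> i div 2 + m \<longrightarrow> thue_morse j = thue_morse (j + m)"
proof (intro allI impI)
  fix j assume "i div 2 \<le> j" "j \<le> i div 2 + m"
  moreover define r where "r = i mod 2"
  ultimately have "i \<le> 2 * j + r" "2 * j + r \<le> i + 2 * m"
    using div_mult_mod_eq[of i 2] by linarith+
  then have "thue_morse (2 * j + r) = thue_morse (2 * (j + m) + r)"
    using assms by (metis add.commute add.left_commute distrib_left)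
  moreover have "r = 0 \<or> r = 1" unfolding r_def by presburger
  ultimately show "thue_morse j = thue_morse (j + m)"
    by (metis add_0_right Suc_eq_plus1 thue_morse_double thue_morse_double_Suc)
qed

lemma thue_morse_no_odd_overlap:
  assumes "odd m" "3 \<le> m"
  shows "\<not> (\<forall>j. i \<le> j \<longrightarrow> j \<le> i + m \<longrightarrow> thue_morse j = thue_morse (j + m))"
proof
  assume per: "\<forall>j. i \<le> j \<longrightarrow> j \<le> i + m \<longrightarrow> thue_morse j = thue_morse (j + m)"
  have alt: "thue_morse j \<noteq> thue_morse (Suc j)" if "i \<le> j" "j < i + m" for j
  proof (cases "even j")
    case True
    then obtain n where "j = 2 * n" by blast
    then show ?thesis by simp
  next
    case False
    with \<open>odd m\<close> obtain n where "j + m = 2 * n" by (metis evenE odd_add)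
    then have "thue_morse (j + m) \<noteq> thue_morse (Suc (j + m))" by simp
    moreover have "thue_morse j = thue_morse (j + m)" "thue_morse (Suc j) = thue_morse (Suc j + m)"
      using per that by simp_all
    ultimately show ?thesis by simp
  qed
  \<comment> \<open>the period carries the alternation on to [i, i + 2m), which contains five steps\<close>
  have "thue_morse j \<noteq> thue_morse (Suc j)" if "i \<le> j" "j < i + 5" for j
  proof (cases "j < i + m")
    case False
    then have "i \<le> j - m" "j - m < i + m" using that \<open>3 \<le> m\<close> by simp_all
    moreover have "thue_morse (j - m) = thue_morse j" "thue_morse (Suc (j - m)) = thue_morse (Suc j)"
      using per \<open>i \<le> j - m\<close> \<open>j - m < i + m\<close> False by (simp_all add: Suc_diff_le)
    ultimately show ?thesis using alt[of "j - m"] by simp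
  qed (use alt that in blast)
  then show False using thue_morse_not_alternating[of i] by blast
qed

lemma thue_morse_overlap_free:
  "0 < m \<Longrightarrow> \<exists>j\<ge>i. j \<le> i + m \<and> thue_morse j \<noteq> thue_morse (j + m)"
proof (induction m arbitrary: i rule: less_induct)
  case (less m)
  show ?case
  proof (rule ccontr)
    assume "\<not> ?case"
    then have per: "\<forall>j. i \<le> j \<longrightarrow> j \<le> i + m \<longrightarrow> thue_morse j = thue_morse (j + m)"
      by auto
    have "even m \<or> m = 1 \<or> odd m \<and> 3 \<le> m" using \<open>0 < m\<close> by presburger
    then consider m' where "m = 2 * m'" | "m = 1" | "odd m" "3 \<le> m"
      by (metis evenE)
    then show False
    proof cases
      case 1
      then have "0 < m'" "m' < m" using \<open>0 < m\<close> by simp_all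
      then show False
        using less.IH[of m' "i div 2"] thue_morse_overlap_halve[of i m'] per[unfolded 1] by blast
    next
      case 2
      then show False using per[rule_format, of i] per[rule_format, of "i + 1"] thue_morse_no_triple[of i] by simp
    next
      case 3
      then show False using thue_morse_no_odd_overlap per by blast
    qed
  qed
qed

text \<open>The difference sequence of the Thue--Morse word, with the values -1, 0, 1 coded as 0, 1, 2.\<close>

definition thue_morse_diff :: "nat \<Rightarrow> nat" where
  "thue_morse_diff n =
     (if thue_morse n = thue_morse (Suc n) then 1 else if thue_morse (Suc n) then 2 else 0)"

lemma thue_morse_diff_eqD:
  assumes "thue_morse_diff p = thue_morse_diff q"
  shows "(thue_morse (Suc p) = thue_morse (Suc q)) = (thue_morse p = thue_morse q)"
    and "thue_morse p \<noteq> thue_morse (Suc p) \<Longrightarrow> thue_morse p = thue_morse q"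
  using assms unfolding thue_morse_diff_def by (auto split: if_splits)

lemma square_free_thue_morse_diff: "square_free thue_morse_diff"
  unfolding square_free_def factor_eq_factor_iff
proof (intro allI impI notI)
  fix a n :: nat
  assume "0 < n" and square: "\<forall>s<n. thue_morse_diff (a + s) = thue_morse_diff (a + n + s)"
  have same: "(thue_morse (a + s) = thue_morse (a + n + s)) = (thue_morse a = thue_morse (a + n))"
    if "s \<le> n" for s
    using that
  proof (induction s)
    case (Suc s)
    then show ?case using thue_morse_diff_eqD(1)[of "a + s" "a + n + s"] square by simp
  qed simp
  show False
  proof (cases "thue_morse a = thue_morse (a + n)")
    case True
    obtain j where "a \<le> j" "j \<le> a + n" "thue_morse j \<noteq> thue_morse (j + n)"
      using thue_morse_overlap_free[OF \<open>0 < n\<close>] by blast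
    moreover obtain s where "j = a + s" using \<open>a \<le> j\<close> le_Suc_ex by blast
    ultimately show False using same[of s] True by (simp add: algebra_simps)
  next
    case False
    \<comment> \<open>the halves of the square are complementary, so their differences vanish\<close>
    have "thue_morse (a + s) = thue_morse a" if "s \<le> n" for s
      using that
    proof (induction s)
      case (Suc s)
      then have "thue_morse (a + s) \<noteq> thue_morse (a + n + s)" using same[of s] False by simp
      then have "thue_morse (a + s) = thue_morse (Suc (a + s))"
        using thue_morse_diff_eqD(2)[of "a + s" "a + n + s"] square Suc.prems by auto
      then show ?case using Suc by simp
    qed simp
    then show False using False by simp
  qed
qed

section \<open>A binary word avoiding reversal pseudo fourth powers\<close>

definition bin_block :: "bool \<Rightarrow> bool list" where
  "bin_block b = (if b then [False, False, False, True, False, True, True, True]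
                       else [False, False, False, True, False, False, True, True])"

definition bin_word :: "nat \<Rightarrow> bool" where
  "bin_word n = bin_block (thue_morse (n div 8)) ! (n mod 8)"

lemma length_bin_block [simp]: "length (bin_block b) = 8"
  by (simp add: bin_block_def)

lemma inj_bin_block: "inj bin_block"
  by (rule injI) (simp add: bin_block_def split: if_splits)

lemma factor_bin_word_block: "factor bin_word (8 * c) 8 = bin_block (thue_morse c)"
  by (rule nth_equalityI) (simp_all add: bin_word_def)

lemma factor_bin_word_blocks:
  "factor bin_word (8 * c) (8 * n) = concat (map (bin_block \<circ> thue_morse) [c..<c + n])"
proof (induction n)
  case (Suc n)
  have "8 * Suc n = 8 * n + 8" "8 * c + 8 * n = 8 * (c + n)" by simp_all
  then have "factor bin_word (8 * c) (8 * Suc n) =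
      factor bin_word (8 * c) (8 * n) @ factor bin_word (8 * (c + n)) 8"
    by (simp only: factor_add)
  then show ?case using Suc factor_bin_word_block[of "c + n"] by (simp add: distrib_left)
qed (simp add: factor_def)

lemma factor_bin_word_two_blocks:
  assumes "l \<le> 9"
  shows "factor bin_word p l =
    take l (drop (p mod 8) (bin_block (thue_morse (p div 8)) @ bin_block (thue_morse (Suc (p div 8)))))"
proof -
  have "p mod 8 + l \<le> 8 * 2" using assms by simp
  then have "factor bin_word (8 * (p div 8) + p mod 8) l =
      take l (drop (p mod 8) (factor bin_word (8 * (p div 8)) (8 * 2)))"
    by (simp only: take_drop_factor)
  moreover have "[p div 8..<p div 8 + 2] = [p div 8, Suc (p div 8)]" by (simp add: upt_rec)
  ultimately show ?thesis by (simp only: factor_bin_word_blocks div_mult_mod_eq) simp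
qed

lemma factor_bin_word_marker_iff: "factor bin_word p 5 = [False, False, False, True, False] \<longleftrightarrow> 8 dvd p"
proof
  assume marker: "factor bin_word p 5 = [False, False, False, True, False]"
  have not_marker: "\<forall>a b. \<forall>r \<in> set [1..<8].
      take 5 (drop r (bin_block a @ bin_block b)) \<noteq> [False, False, False, True, False]"
    unfolding bin_block_def by code_simp
  show "8 dvd p"
  proof (rule ccontr)
    assume "\<not> 8 dvd p"
    then have "p mod 8 \<in> set [1..<8]" by (auto simp: dvd_eq_mod_eq_0)
    then show False
      using not_marker marker factor_bin_word_two_blocks[of 5 p] by simp
  qed
next
  assume "8 dvd p"
  then show "factor bin_word p 5 = [False, False, False, True, False]"
    using factor_bin_word_two_blocks[of 5 p] by (simp add: bin_block_def)
qed

lemma rev_factor_bin_word: "rev (factor bin_word p 7) \<noteq> factor bin_word q 7"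
proof -
  have "\<forall>a b a' b'. \<forall>r \<in> set [0..<8]. \<forall>r' \<in> set [0..<8].
      rev (take 7 (drop r (bin_block a @ bin_block b))) \<noteq> take 7 (drop r' (bin_block a' @ bin_block b'))"
    unfolding bin_block_def by code_simp
  moreover have "p mod 8 \<in> set [0..<8]" "q mod 8 \<in> set [0..<8]" by simp_all
  moreover have "factor bin_word p 7 =
      take 7 (drop (p mod 8) (bin_block (thue_morse (p div 8)) @ bin_block (thue_morse (Suc (p div 8)))))"
    for p :: nat by (rule factor_bin_word_two_blocks) simp
  ultimately show ?thesis by metis
qed

lemma bin_word_no_short_rev_fourth_power:
  assumes "0 < m" "m < 7"
  shows "\<not> (\<forall>t<4. factor bin_word (i + t * m) m \<in> {factor bin_word i m, rev (factor bin_word i m)})"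
proof -
  define a q where "a = i div 8" and "q = i mod 8"
  define w where "w = drop q (factor bin_word (8 * a) (8 * 4))"
  have search: "\<forall>a b c d. \<forall>q \<in> set [0..<8]. \<forall>m \<in> set [1..<7]. \<exists>t \<in> set [1, 2, 3].
      let w = drop q (bin_block a @ bin_block b @ bin_block c @ bin_block d)
      in take m (drop (t * m) w) \<noteq> take m w \<and> take m (drop (t * m) w) \<noteq> rev (take m w)"
    unfolding bin_block_def by code_simp
  have "factor bin_word (8 * a) (8 * 4) = bin_block (thue_morse a) @
      bin_block (thue_morse (Suc a)) @ bin_block (thue_morse (Suc (Suc a))) @
      bin_block (thue_morse (Suc (Suc (Suc a))))"
    using factor_bin_word_blocks[of a 4] by (simp add: upt_rec)
  then have w: "w = drop q (bin_block (thue_morse a) @ bin_block (thue_morse (Suc a)) @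
      bin_block (thue_morse (Suc (Suc a))) @ bin_block (thue_morse (Suc (Suc (Suc a)))))"
    unfolding w_def by (simp only:)
  have "q \<in> set [0..<8]" "m \<in> set [1..<7]" using assms by (simp_all add: q_def)
  then have "\<exists>t \<in> set [1, 2, 3]. take m (drop (t * m) w) \<noteq> take m w \<and> take m (drop (t * m) w) \<noteq> rev (take m w)"
    using search unfolding w Let_def by blast
  then obtain t where "t \<in> set [1, 2, 3]" and t: "take m (drop (t * m) w) \<notin> {take m w, rev (take m w)}"
    by blast
  then have "t < 4" by auto
  have block: "factor bin_word (i + t * m) m = take m (drop (t * m) w)" if "t < 4" for t
  proof -
    have "(t + 1) * m \<le> 4 * 6" using that assms by (intro mult_le_mono) simp_all
    then have "take m (drop (t * m) w) = factor bin_word (8 * a + (t * m + q)) m"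
      unfolding w_def drop_drop using q_def by (intro take_drop_factor) simp
    moreover have "i + t * m = 8 * a + (t * m + q)" by (simp add: a_def q_def)
    ultimately show ?thesis by (simp only:)
  qed
  show ?thesis
    using t block[OF \<open>t < 4\<close>] block[of 0] \<open>t < 4\<close> by auto
qed

lemma bin_word_no_long_fourth_power:
  assumes "7 \<le> m"
  shows "\<not> (\<forall>s<3 * m. bin_word (i + m + s) = bin_word (i + s))"
proof
  assume period: "\<forall>s<3 * m. bin_word (i + m + s) = bin_word (i + s)"
  have shift: "factor bin_word (p + m) l = factor bin_word p l" if "i \<le> p" "p + l \<le> i + 3 * m" for p l
    unfolding factor_eq_factor_iff
  proof (intro allI impI)
    fix s assume "s < l"
    then show "bin_word (p + m + s) = bin_word (p + s)"
      using period[rule_format, of "p - i + s"] that by (simp add: algebra_simps)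
  qed
  \<comment> \<open>the block boundaries are marked, so the period m must be a multiple of the block length\<close>
  define A where "A = (i + 7) div 8"
  have "i \<le> 8 * A" "8 * A \<le> i + 7" by (simp_all add: A_def)
  then have "factor bin_word (8 * A + m) 5 = factor bin_word (8 * A) 5"
    using \<open>7 \<le> m\<close> by (intro shift) simp_all
  then have "8 dvd 8 * A + m"
    using factor_bin_word_marker_iff[of "8 * A"] factor_bin_word_marker_iff[of "8 * A + m"] by simp
  then obtain r where "m = 8 * r" by (metis dvd_add_right_iff dvd_triv_left dvdE)
  then have "0 < r" using \<open>7 \<le> m\<close> by simp
  then obtain j where "A \<le> j" "j \<le> A + r" "thue_morse j \<noteq> thue_morse (j + r)"
    using thue_morse_overlap_free by blast
  moreover have "factor bin_word (8 * j + m) 8 = factor bin_word (8 * j) 8"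
    using \<open>i \<le> 8 * A\<close> \<open>8 * A \<le> i + 7\<close> \<open>A \<le> j\<close> \<open>j \<le> A + r\<close> \<open>m = 8 * r\<close> \<open>0 < r\<close>
    by (intro shift) simp_all
  then have "bin_block (thue_morse (j + r)) = bin_block (thue_morse j)"
    using \<open>m = 8 * r\<close> factor_bin_word_block by (metis distrib_left)
  ultimately show False using inj_bin_block by (metis injD)
qed

lemma bin_word_no_rev_fourth_power:
  assumes "0 < m"
  shows "\<not> (\<forall>t<4. factor bin_word (i + t * m) m \<in> {factor bin_word i m, rev (factor bin_word i m)})"
proof
  define u where "u = factor bin_word i m"
  assume blocks: "\<forall>t<4. factor bin_word (i + t * m) m \<in> {factor bin_word i m, rev (factor bin_word i m)}"
  show False
  proof (cases "m < 7")
    case True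
    then show False using blocks bin_word_no_short_rev_fourth_power[OF \<open>0 < m\<close>] by blast
  next
    case False
    \<comment> \<open>long blocks cannot be reversals, since no factor of length 7 occurs reversed\<close>
    have equal: "factor bin_word (i + t * m) m = u" if "t < 4" for t
    proof (rule ccontr)
      assume "factor bin_word (i + t * m) m \<noteq> u"
      then have "factor bin_word (i + t * m) m = rev u" using blocks that u_def by blast
      then have "take 7 (factor bin_word (i + t * m) m) = take 7 (rev u)" by simp
      moreover have "take 7 (factor bin_word (i + t * m) m) = factor bin_word (i + t * m) 7"
        using False take_drop_factor[of 0 7 m bin_word "i + t * m"] by simp
      moreover have "take 7 (rev u) = rev (factor bin_word (i + (m - 7)) 7)"
        using False take_drop_factor[of "m - 7" 7 m bin_word i] by (simp add: u_def take_rev)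
      ultimately show False using rev_factor_bin_word by metis
    qed
    have "bin_word (i + m + s) = bin_word (i + s)" if "s < 3 * m" for s
    proof -
      define t r where "t = s div m" and "r = s mod m"
      have "t < 3" "r < m" "s = t * m + r"
        using that \<open>0 < m\<close> by (simp_all add: t_def r_def less_mult_imp_div_less)
      then have "Suc t < 4" "t < 4" by simp_all
      then have "factor bin_word (i + Suc t * m) m = factor bin_word (i + t * m) m"
        using equal by (metis (no_types))
      then have "bin_word (i + Suc t * m + r) = bin_word (i + t * m + r)"
        using \<open>r < m\<close> by (metis nth_factor)
      then show ?thesis using \<open>r < m\<close> \<open>s = t * m + r\<close> by (simp add: algebra_simps)
    qed
    moreover have "7 \<le> m" using False by simp
    ultimately show False using bin_word_no_long_fourth_power by blast
  qed
qed

lemma antimorphic_involution_rev: "antimorphic_involution S rev"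
  by (simp add: antimorphic_involution_def in_lists_conv_set)

lemma pseudo_power_free_rev_comp_bin_word:
  assumes h: "inj h" "range h \<subseteq> S" and "4 \<le> k"
  shows "pseudo_power_free_inf rev k (h \<circ> bin_word)"
  unfolding pseudo_power_free_inf_iff_factor
proof (intro allI notI)
  fix i n
  assume "pseudo_power rev k (factor (h \<circ> bin_word) i n)"
  moreover have "infinite_word S (h \<circ> bin_word)" using h by (auto simp: infinite_word_def)
  ultimately obtain m where "0 < m" and blocks: "\<forall>t<k.
      factor (h \<circ> bin_word) (i + t * m) m = factor (h \<circ> bin_word) i m \<or>
      factor (h \<circ> bin_word) (i + t * m) m = rev (factor (h \<circ> bin_word) i m)"
    using pseudo_power_factor_blocks[OF antimorphic_involution_rev] by blast
  have "factor bin_word (i + t * m) m \<in> {factor bin_word i m, rev (factor bin_word i m)}"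
    if "t < 4" for t
  proof -
    have "map h (factor bin_word (i + t * m) m) = map h (factor bin_word i m) \<or>
        map h (factor bin_word (i + t * m) m) = map h (rev (factor bin_word i m))"
      using blocks that \<open>4 \<le> k\<close> by (simp add: factor_comp rev_map)
    then show ?thesis using \<open>inj h\<close> by simp
  qed
  then show False using bin_word_no_rev_fourth_power[OF \<open>0 < m\<close>] by blast
qed

lemma not_pseudo_power_free_if_letters_related:
  assumes "0 < k" and x: "infinite_word S x"
    and related: "\<forall>a\<in>S. \<forall>b\<in>S. [a] = [b] \<or> [a] = \<theta> [b]"
  shows "\<not> pseudo_power_free_inf \<theta> k x"
proof -
  have "pseudo_power \<theta> k (factor x 0 k)"
    unfolding pseudo_power_def
  proof (intro conjI exI)
    show "factor x 0 k \<noteq> []" using \<open>0 < k\<close> by (metis length_factor length_greater_0_conv)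
    show "length (map (\<lambda>n. [x n]) [0..<k]) = k" by simp
    show "concat (map (\<lambda>n. [x n]) [0..<k]) = factor x 0 k"
      by (simp add: factor_def concat_map_singleton)
    show "\<forall>i<k. \<forall>j<k. map (\<lambda>n. [x n]) [0..<k] ! i = map (\<lambda>n. [x n]) [0..<k] ! j \<or>
        map (\<lambda>n. [x n]) [0..<k] ! i = \<theta> (map (\<lambda>n. [x n]) [0..<k] ! j)"
      using related x unfolding infinite_word_def by simp
  qed
  then show ?thesis unfolding pseudo_power_free_inf_iff_factor by blast
qed

lemma exists_pseudo_power_free_word_if_card_ge_3:
  assumes "3 \<le> card S" and \<theta>: "antimorphic_involution S \<theta>" and "4 \<le> k"
  shows "\<exists>x. infinite_word S x \<and> pseudo_power_free_inf \<theta> k x"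
proof -
  have "\<exists>h. h ` {..<3::nat} \<subseteq> S \<and> inj_on h {..<3}"
    using assms(1) by (intro card_le_inj) (simp_all add: card_ge_0_finite)
  then obtain h where h: "h ` {..<3} \<subseteq> S" "inj_on h {..<3::nat}" by blast
  have range: "range thue_morse_diff \<subseteq> {..<3}" by (auto simp: thue_morse_diff_def)
  have "infinite_word S (h \<circ> thue_morse_diff)"
    using h(1) range unfolding infinite_word_def comp_def by blast
  moreover have "square_free (h \<circ> thue_morse_diff)"
    using square_free_comp[OF square_free_thue_morse_diff inj_on_subset[OF h(2) range]] .
  ultimately show ?thesis
    using square_free_imp_pseudo_power_free[OF \<theta>] \<open>4 \<le> k\<close> by blast
qed

lemma exists_rev_pseudo_power_free_word_if_card_ge_2:
  assumes "2 \<le> card S" and "4 \<le> k"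
  shows "\<exists>x. infinite_word S x \<and> pseudo_power_free_inf rev k x"
proof -
  have "\<exists>h :: bool \<Rightarrow> _. h ` UNIV \<subseteq> S \<and> inj_on h UNIV"
    using assms(1) by (intro card_le_inj) (simp_all add: card_ge_0_finite)
  then obtain h :: "bool \<Rightarrow> _" where "range h \<subseteq> S" "inj h" by blast
  then have "infinite_word S (h \<circ> bin_word)" "pseudo_power_free_inf rev k (h \<circ> bin_word)"
    using pseudo_power_free_rev_comp_bin_word \<open>4 \<le> k\<close> unfolding infinite_word_def by auto
  then show ?thesis by blast
qed

lemma card_2_letter_swapping_involution:
  assumes "card S = 2"
  shows "\<exists>\<theta>. antimorphic_involution S \<theta> \<and> (\<forall>a\<in>S. \<forall>b\<in>S. [a] = [b] \<or> [a] = \<theta> [b])"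
proof -
  obtain a b where S: "S = {a, b}" "a \<noteq> b" using assms card_2_iff by metis
  define swap where "swap c = (if c = a then b else a)" for c
  have swap_swap: "swap (swap c) = c" if "c \<in> S" for c using that S by (auto simp: swap_def)
  have "antimorphic_involution S (\<lambda>w. rev (map swap w))"
    unfolding antimorphic_involution_def
  proof (intro conjI ballI)
    fix w assume "w \<in> lists S"
    then have "map swap (map swap w) = w" using swap_swap by (induction w) auto
    then show "rev (map swap (rev (map swap w))) = w" by (simp add: rev_map[symmetric])
  qed (use S in \<open>auto simp: swap_def\<close>)
  moreover have "\<forall>c\<in>S. \<forall>d\<in>S. [c] = [d] \<or> [c] = rev (map swap [d])"
    using S by (auto simp: swap_def)
  ultimately show ?thesis by blast
qed

lemma no_pseudo_power_free_word_if_card_le_1: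
  assumes "finite S" "card S \<le> 1" "0 < k"
  shows "\<not> (\<exists>x. infinite_word S x \<and> pseudo_power_free_inf \<theta> k x)"
proof -
  have "\<forall>a\<in>S. \<forall>b\<in>S. [a] = [b] \<or> [a] = \<theta> [b]"
    using assms(2) card_le_Suc0_iff_eq[OF \<open>finite S\<close>] by simp
  then show ?thesis using not_pseudo_power_free_if_letters_related \<open>0 < k\<close> by blast
qed

lemma card_2_pseudo_power_freeness_depends_on_involution:
  assumes "card S = 2" and "4 \<le> k"
  shows "\<exists>\<theta>1 \<theta>2. antimorphic_involution S \<theta>1 \<and> antimorphic_involution S \<theta>2 \<and>
           (\<exists>x. infinite_word S x \<and> pseudo_power_free_inf \<theta>1 k x) \<and>
           \<not> (\<exists>x. infinite_word S x \<and> pseudo_power_free_inf \<theta>2 k x)"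
proof -
  obtain \<theta> where \<theta>: "antimorphic_involution S \<theta>" "\<forall>a\<in>S. \<forall>b\<in>S. [a] = [b] \<or> [a] = \<theta> [b]"
    using card_2_letter_swapping_involution[OF \<open>card S = 2\<close>] by blast
  have "\<exists>x. infinite_word S x \<and> pseudo_power_free_inf rev k x"
    using exists_rev_pseudo_power_free_word_if_card_ge_2[of S k] assms by simp
  moreover have "\<not> (\<exists>x. infinite_word S x \<and> pseudo_power_free_inf \<theta> k x)"
    using not_pseudo_power_free_if_letters_related[of k S _ \<theta>] \<theta>(2) \<open>4 \<le> k\<close> by auto
  ultimately show ?thesis using antimorphic_involution_rev \<theta>(1) by blast
qed

theorem mainTheorem3:
  fixes S :: "'a set" and k :: nat
  assumes "finite S" and "k \<ge> 4"
  shows "(card S \<le> 1 \<longrightarrow>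
            (\<forall>\<theta>. antimorphic_involution S \<theta> \<longrightarrow>
               \<not> (\<exists>x. infinite_word S x \<and> pseudo_power_free_inf \<theta> k x))) \<and>
         (card S \<ge> 3 \<longrightarrow>
            (\<forall>\<theta>. antimorphic_involution S \<theta> \<longrightarrow>
               (\<exists>x. infinite_word S x \<and> pseudo_power_free_inf \<theta> k x))) \<and>
         (card S = 2 \<longrightarrow>
            (\<exists>\<theta>1 \<theta>2. antimorphic_involution S \<theta>1 \<and> antimorphic_involution S \<theta>2 \<and>
               (\<exists>x. infinite_word S x \<and> pseudo_power_free_inf \<theta>1 k x) \<and>
               \<not> (\<exists>x. infinite_word S x \<and> pseudo_power_free_inf \<theta>2 k x)))"
proof (intro conjI impI allI)
  show "\<not> (\<exists>x. infinite_word S x \<and> pseudo_power_free_inf \<theta> k x)" if "card S \<le> 1" for \<theta>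
    using no_pseudo_power_free_word_if_card_le_1[OF \<open>finite S\<close> that] \<open>k \<ge> 4\<close> by simp
  show "\<exists>x. infinite_word S x \<and> pseudo_power_free_inf \<theta> k x"
    if "card S \<ge> 3" "antimorphic_involution S \<theta>" for \<theta>
    using exists_pseudo_power_free_word_if_card_ge_3 that \<open>k \<ge> 4\<close> by blast
qed (use card_2_pseudo_power_freeness_depends_on_involution \<open>k \<ge> 4\<close> in blast)

end
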